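(* Let $\kappa_0\in\mathbb{C}$ with $\Re(\kappa_0)>0$, let $N\ge 0$ and $p\ge 2$ be integers, and let $T\subset\mathbb{R}^2$ be a non-degenerate triangle with variable $\hat{x}=(\hat x_1,\hat x_2)$. Define the finite-dimensional spaces $$W_{\hat K}=W_\xi\otimes W_T,\qquad V_{\hat K}=\begin{pmatrix}W_\xi'\otimes W_T\\ W_\xi\otimes V_T\end{pmatrix},\qquad Q_{\hat K}=\begin{pmatrix}W_\xi\otimes Q_T\\ W_\xi'\otimes V_T^\perp\end{pmatrix},\qquad X_{\hat K}=W_\xi'\otimes X_T,$$ where $W_T=P^p(T)$, $V_T=(P^{p-1}(T))^2$, $V_T^\perp=\{\mathbf v^\perp:\mathbf v\in V_T\}$, $Q_T=X_T=P^{p-2}(T)$, and $W_\xi,W_\xi'$ are as in the context. Define the operators $$\hat\nabla=\begin{pmatrix}\hat\partial_\xi\otimes \mathrm{id}\\ \mathrm{id}\otimes\nabla_{\hat x}\end{pmatrix}:W_{\hat K}\to V_{\hat K},\qquad \hat\nabla\times=\begin{pmatrix}0&\mathrm{id}\otimes\nabla_{\hat x}^\perp\cdot\\ -\mathrm{id}\otimes\nabla_{\hat x}^\perp&\hat\partial_\xi\otimes\mathrm{id}^\perp\end{pmatrix}:V_{\hat K}\to Q_{\hat K},$$ $$\hat\nabla\cdot=\begin{pmatrix}\hat\partial_\xi\otimes\mathrm{id}&\mathrm{id}\otimes\nabla_{\hat x}\cdot\end{pmatrix}:Q_{\hat K}\to X_{\hat K}.$$ Then the sequence $$W_{\hat K}\xrightarrow{\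 \hat\nabla\ }V_{\hat K}\xrightarrow{\ \hat\nabla\times\ }Q_{\hat K}\xrightarrow{\ \hat\nabla\cdot\ }X_{\hat K}\xrightarrow{\ 0\ }\{0\}$$ is exact, i.e. $\hat\nabla W_{\hat K}=\ker(\hat\nabla\times)$, $\hat\nabla\times V_{\hat K}=\ker(\hat\nabla\cdot)$, and $\hat\nabla\cdot Q_{\hat K}=X_{\hat K}$.
   Context: $H^+(S^1)$ denotes the Hardy space of the unit disk (functions holomorphic in $\{|z|<1\}$ with $L^2$ boundary values on the unit circle), in which the monomials $z^0,z^1,\dots$ form an orthogonal basis. Let $\Pi_N=\mathrm{span}\{z^0,\dots,z^N\}$. For $u_0\in\mathbb{C}$ and $\hat U\in H^+(S^1)$ define $\mathcal{T}_\pm(u_0,\hat U)(z)=\tfrac12\big(u_0+(z\pm1)\hat U(z)\big)$; these maps $\mathbb{C}\times H^+(S^1)\to H^+(S^1)$ are injective. Set $W_\xi=\frac{1}{i\kappa_0}\mathcal{T}_-(\mathbb{C}\times\Pi_N)$ and $W_\xi'=\mathcal{T}_+(\mathbb{C}\times\Pi_N)$, and define $\hat\partial_\xi:W_\xi\to W_\xi'$ by $\hat\partial_\xi=i\kappa_0\,\mathcal{T}_+\mathcal{T}_-^{-1}$, i.e. $\hat\partial_\xi\big(\tfrac{1}{i\kappa_0}\mathcal{T}_-(u_0,\hat U)\big)=\mathcal{T}_+(u_0,\hat U)$. $P^k(T)$ is the space of polynomials of total degree at most $k$ in $\hat x$ on $T$. For a vector $\mathbf v=(v_1,v_2)$, $\mathbf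 v^\perp=(-v_2,v_1)$; $\mathrm{id}^\perp$ denotes the map $\mathbf v\mapsto\mathbf v^\perp$; $\nabla_{\hat x}$ is the 2D gradient, $\nabla_{\hat x}^\perp=(-\partial_{\hat x_2},\partial_{\hat x_1})^T$ (so $\nabla_{\hat x}^\perp\cdot$ is the scalar curl), and $\nabla_{\hat x}\cdot$ the 2D divergence. Tensor products are algebraic tensor products of finite-dimensional function spaces (functions of $(z,\hat x)$), with operators acting factorwise; $\mathrm{id}$ is the identity. *)

theory Defs
  imports "HOL-Analysis.Analysis"
begin

type_synonym sfun = "complex \<Rightarrow> real \<times> real \<Rightarrow> complex"

definition PiN :: "nat \<Rightarrow> (complex \<Rightarrow> complex) set" where
  "PiN N = {f. \<exists>c :: nat \<Rightarrow> complex. f = (\<lambda>z. \<Sum>i\<le>N. c i * z ^ i)}"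

definition Tminus :: "complex \<Rightarrow> (complex \<Rightarrow> complex) \<Rightarrow> complex \<Rightarrow> complex" where
  "Tminus u0 U = (\<lambda>z. (u0 + (z - 1) * U z) / 2)"

definition Tplus :: "complex \<Rightarrow> (complex \<Rightarrow> complex) \<Rightarrow> complex \<Rightarrow> complex" where
  "Tplus u0 U = (\<lambda>z. (u0 + (z + 1) * U z) / 2)"

definition Wxi :: "complex \<Rightarrow> nat \<Rightarrow> (complex \<Rightarrow> complex) set" where
  "Wxi \<kappa>0 N = {(\<lambda>z. Tminus u0 U z / (\<i> * \<kappa>0)) | u0 U. U \<in> PiN N}"

definition Wxi' :: "nat \<Rightarrow> (complex \<Rightarrow> complex) set" where
  "Wxi' N = {Tplus u0 U | u0 U. U \<in> PiN N}"

text \<open>hat-partial-xi = i kappa0 T_+ T_-^{-1}.\<close>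
definition dxi :: "complex \<Rightarrow> nat \<Rightarrow> (complex \<Rightarrow> complex) \<Rightarrow> (complex \<Rightarrow> complex)" where
  "dxi \<kappa>0 N w = (THE g. \<exists>u0 U. U \<in> PiN N \<and>
      w = (\<lambda>z. Tminus u0 U z / (\<i> * \<kappa>0)) \<and> g = Tplus u0 U)"

definition Pk :: "nat \<Rightarrow> (real \<times> real \<Rightarrow> complex) set" where
  "Pk k = {f. \<exists>c :: nat \<Rightarrow> nat \<Rightarrow> complex.
      f = (\<lambda>(x1, x2). \<Sum>i\<le>k. \<Sum>j\<le>k - i. c i j * complex_of_real x1 ^ i * complex_of_real x2 ^ j)}"

definition tensorP :: "(complex \<Rightarrow> complex) set \<Rightarrow> (real \<times> real \<Rightarrow> complex) set \<Rightarrow> sfun set" where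
  "tensorP A B = {F. \<exists>(n::nat) a b. (\<forall>k<n. a k \<in> A \<and> b k \<in> B) \<and>
      F = (\<lambda>z x. \<Sum>k<n. a k z * b k x)}"

definition dxiT :: "complex \<Rightarrow> nat \<Rightarrow> sfun \<Rightarrow> sfun" where
  "dxiT \<kappa>0 N F = (\<lambda>z x. dxi \<kappa>0 N (\<lambda>z'. F z' x) z)"

definition d1 :: "sfun \<Rightarrow> sfun" where
  "d1 F = (\<lambda>z x. vector_derivative (\<lambda>t. F z (t, snd x)) (at (fst x)))"

definition d2 :: "sfun \<Rightarrow> sfun" where
  "d2 F = (\<lambda>z x. vector_derivative (\<lambda>t. F z (fst x, t)) (at (snd x)))"

definition zf :: sfun where "zf = (\<lambda>z x. 0)"

definition WK :: "complex \<Rightarrow> nat \<Rightarrow> nat \<Rightarrow> sfun set" where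
  "WK \<kappa>0 N p = tensorP (Wxi \<kappa>0 N) (Pk p)"

definition VK :: "complex \<Rightarrow> nat \<Rightarrow> nat \<Rightarrow> (sfun \<times> (sfun \<times> sfun)) set" where
  "VK \<kappa>0 N p = {(u, (v1, v2)). u \<in> tensorP (Wxi' N) (Pk p) \<and>
      v1 \<in> tensorP (Wxi \<kappa>0 N) (Pk (p - 1)) \<and> v2 \<in> tensorP (Wxi \<kappa>0 N) (Pk (p - 1))}"

text \<open>Second component: W_xi' tensorP V_T^perp, i.e. perp of elements of W_xi' tensorP V_T.\<close>
definition QK :: "complex \<Rightarrow> nat \<Rightarrow> nat \<Rightarrow> (sfun \<times> (sfun \<times> sfun)) set" where
  "QK \<kappa>0 N p = {(q, (w1, w2)). q \<in> tensorP (Wxi \<kappa>0 N) (Pk (p - 2)) \<and>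
      (\<exists>g1 g2. g1 \<in> tensorP (Wxi' N) (Pk (p - 1)) \<and> g2 \<in> tensorP (Wxi' N) (Pk (p - 1)) \<and>
         w1 = (\<lambda>z x. - g2 z x) \<and> w2 = g1)}"

definition XK :: "nat \<Rightarrow> nat \<Rightarrow> sfun set" where
  "XK N p = tensorP (Wxi' N) (Pk (p - 2))"

definition gradK :: "complex \<Rightarrow> nat \<Rightarrow> sfun \<Rightarrow> sfun \<times> (sfun \<times> sfun)" where
  "gradK \<kappa>0 N F = (dxiT \<kappa>0 N F, (d1 F, d2 F))"

text \<open>curl (u,v) = (curl_x v, -rot_x u + (dxi v)^perp), with
  rot_x u = (-d2 u, d1 u), curl_x v = -d2 v1 + d1 v2, perp (a,b) = (-b,a).\<close>
definition curlK :: "complex \<Rightarrow> nat \<Rightarrow> sfun \<times> (sfun \<times> sfun) \<Rightarrow> sfun \<times> (sfun \<times> sfun)" where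
  "curlK \<kappa>0 N V = (case V of (u, (v1, v2)) \<Rightarrow>
      ((\<lambda>z x. - d2 v1 z x + d1 v2 z x),
       ((\<lambda>z x. d2 u z x - dxiT \<kappa>0 N v2 z x), (\<lambda>z x. - d1 u z x + dxiT \<kappa>0 N v1 z x))))"

definition divK :: "complex \<Rightarrow> nat \<Rightarrow> sfun \<times> (sfun \<times> sfun) \<Rightarrow> sfun" where
  "divK \<kappa>0 N Q = (case Q of (q, (w1, w2)) \<Rightarrow>
      (\<lambda>z x. dxiT \<kappa>0 N q z x + d1 w1 z x + d2 w2 z x))"

end

theory Submission
  imports Defs "HOL-Library.Function_Algebras"
begin

text \<open>
  The operator \<open>\<partial>\<^sub>\<xi> = i\<kappa>\<^sub>0 T\<^sub>+ T\<^sub>-\<^sup>-\<^sup>1\<close> is a linear isomorphism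
  \<open>W\<^sub>\<xi> \<rightarrow> W\<^sub>\<xi>'\<close>, because \<open>T\<^sub>\<plusminus>\<close> are injective. Acting on the first tensor factor, it and
  its inverse \<open>E\<close> commute with the \<open>x\<close>-derivatives, which map \<open>P\<^sup>k\<close> into \<open>P\<^sup>k\<^sup>-\<^sup>1\<close>
  and commute with each other. This gives \<open>\<nabla>\<times>\<nabla> = 0\<close> and \<open>\<nabla>\<cdot>\<nabla>\<times> = 0\<close>, and \<open>E\<close>
  supplies all preimages: a curl-free \<open>(u, v)\<close> is the gradient of \<open>E u\<close>, a divergence-free
  \<open>(q, w\<^sub>1, w\<^sub>2)\<close> is the curl of \<open>(0, E w\<^sub>2, -E w\<^sub>1)\<close>, and \<open>f\<close> is the divergence of
  \<open>(E f, 0, 0)\<close>. In other words, an acyclic \<open>\<xi>\<close>-factor makes the tensor complex exact.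
\<close>

section \<open>Linear spaces of complex-valued functions\<close>

definition lin_space :: "('a \<Rightarrow> complex) set \<Rightarrow> bool" where
  "lin_space S \<longleftrightarrow> 0 \<in> S \<and> (\<forall>f\<in>S. \<forall>g\<in>S. f + g \<in> S) \<and> (\<forall>f\<in>S. \<forall>c. (\<lambda>x. c * f x) \<in> S)"

definition lin_on :: "(('a \<Rightarrow> complex) \<Rightarrow> ('b \<Rightarrow> complex)) \<Rightarrow> ('a \<Rightarrow> complex) set \<Rightarrow> bool" where
  "lin_on L S \<longleftrightarrow> (\<forall>f\<in>S. \<forall>g\<in>S. L (f + g) = L f + L g) \<and> (\<forall>f\<in>S. \<forall>c. L (\<lambda>x. c * f x) = (\<lambda>x. c * L f x))"

lemma lin_space_zero: "lin_space S \<Longrightarrow> 0 \<in> S"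
  and lin_space_add: "lin_space S \<Longrightarrow> f \<in> S \<Longrightarrow> g \<in> S \<Longrightarrow> f + g \<in> S"
  and lin_space_scale: "lin_space S \<Longrightarrow> f \<in> S \<Longrightarrow> (\<lambda>x. c * f x) \<in> S"
  unfolding lin_space_def by blast+

lemma lin_space_uminus: "lin_space S \<Longrightarrow> f \<in> S \<Longrightarrow> - f \<in> S"
  using lin_space_scale[of S f "-1"] by (simp add: fun_Compl_def)

lemma lin_space_sum:
  assumes "lin_space S" "\<And>i. i \<in> I \<Longrightarrow> f i \<in> S"
  shows "(\<lambda>x. \<Sum>i\<in>I. f i x) \<in> S"
  using assms(2)
proof (induction I rule: infinite_finite_induct)
  case (insert i I)
  then have "f i + (\<lambda>x. \<Sum>i\<in>I. f i x) \<in> S" by (simp add: lin_space_add assms(1))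
  with insert show ?case by (simp add: plus_fun_def)
qed (simp_all add: lin_space_zero[OF assms(1), unfolded zero_fun_def])

lemma lin_on_add: "lin_on L S \<Longrightarrow> f \<in> S \<Longrightarrow> g \<in> S \<Longrightarrow> L (f + g) = L f + L g"
  and lin_on_scale: "lin_on L S \<Longrightarrow> f \<in> S \<Longrightarrow> L (\<lambda>x. c * f x) = (\<lambda>x. c * L f x)"
  unfolding lin_on_def by blast+

lemma lin_on_uminus: "lin_on L S \<Longrightarrow> f \<in> S \<Longrightarrow> L (- f) = - L f"
  using lin_on_scale[of L S f "-1"] by (simp add: fun_Compl_def)

lemma lin_on_zero: "lin_space S \<Longrightarrow> lin_on L S \<Longrightarrow> L 0 = 0"
  using lin_on_scale[of L S 0 0] lin_space_zero[of S] by (simp add: zero_fun_def)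

lemma lin_on_sum:
  assumes "lin_space S" "lin_on L S" "\<And>i. i \<in> I \<Longrightarrow> f i \<in> S"
  shows "L (\<lambda>x. \<Sum>i\<in>I. c i * f i x) = (\<lambda>x. \<Sum>i\<in>I. c i * L (f i) x)"
  using assms(3)
proof (induction I rule: infinite_finite_induct)
  case (insert i I)
  have "(\<lambda>x. c i * f i x) \<in> S" "(\<lambda>x. \<Sum>i\<in>I. c i * f i x) \<in> S"
    using insert.prems by (auto intro!: lin_space_scale lin_space_sum assms(1))
  then have "L ((\<lambda>x. c i * f i x) + (\<lambda>x. \<Sum>i\<in>I. c i * f i x))
      = (\<lambda>x. c i * L (f i) x) + (\<lambda>x. \<Sum>i\<in>I. c i * L (f i) x)"
    using insert by (simp add: lin_on_add[OF assms(2)] lin_on_scale[OF assms(2)])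
  then show ?case
    using insert.hyps by (simp add: plus_fun_def)
qed (simp_all add: lin_on_zero[OF assms(1,2), unfolded zero_fun_def])

section \<open>Polynomials in two real variables\<close>

definition partial1 :: "(real \<times> real \<Rightarrow> complex) \<Rightarrow> real \<times> real \<Rightarrow> complex" where
  "partial1 f = (\<lambda>x. vector_derivative (\<lambda>t. f (t, snd x)) (at (fst x)))"

definition partial2 :: "(real \<times> real \<Rightarrow> complex) \<Rightarrow> real \<times> real \<Rightarrow> complex" where
  "partial2 f = (\<lambda>x. vector_derivative (\<lambda>t. f (fst x, t)) (at (snd x)))"

text \<open>Monomial sums with arbitrary exponent maps: partial derivatives stay of this form.\<close>

definition mono_sum :: "'i set \<Rightarrow> ('i \<Rightarrow> complex) \<Rightarrow> ('i \<Rightarrow> nat) \<Rightarrow> ('i \<Rightarrow> nat) \<Rightarrow> real \<times> real \<Rightarrow> complex" where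
  "mono_sum I c \<alpha> \<beta> = (\<lambda>x. \<Sum>i\<in>I. c i * of_real (fst x) ^ \<alpha> i * of_real (snd x) ^ \<beta> i)"

lemma mono_sum_has_partial1:
  "((\<lambda>t. mono_sum I c \<alpha> \<beta> (t, y)) has_vector_derivative
     mono_sum I (\<lambda>i. c i * of_nat (\<alpha> i)) (\<lambda>i. \<alpha> i - 1) \<beta> (s, y)) (at s)"
  unfolding mono_sum_def fst_conv snd_conv
proof (intro has_vector_derivative_sum)
  fix i
  have "((\<lambda>w. c i * w ^ \<alpha> i * of_real y ^ \<beta> i) has_field_derivative
      c i * of_nat (\<alpha> i) * of_real s ^ (\<alpha> i - 1) * of_real y ^ \<beta> i) (at (of_real s))"
    by (auto intro!: derivative_eq_intros)
  then show "((\<lambda>t. c i * of_real t ^ \<alpha> i * of_real y ^ \<beta> i) has_vector_derivative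
      c i * of_nat (\<alpha> i) * of_real s ^ (\<alpha> i - 1) * of_real y ^ \<beta> i) (at s)"
    by (rule has_vector_derivative_real_field)
qed

lemma mono_sum_has_partial2:
  "((\<lambda>t. mono_sum I c \<alpha> \<beta> (y, t)) has_vector_derivative
     mono_sum I (\<lambda>i. c i * of_nat (\<beta> i)) \<alpha> (\<lambda>i. \<beta> i - 1) (y, s)) (at s)"
  unfolding mono_sum_def fst_conv snd_conv
proof (intro has_vector_derivative_sum)
  fix i
  have "((\<lambda>w. c i * of_real y ^ \<alpha> i * w ^ \<beta> i) has_field_derivative
      c i * of_nat (\<beta> i) * of_real y ^ \<alpha> i * of_real s ^ (\<beta> i - 1)) (at (of_real s))"
    by (auto intro!: derivative_eq_intros simp: algebra_simps)
  then show "((\<lambda>t. c i * of_real y ^ \<alpha> i * of_real t ^ \<beta> i) has_vector_derivative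
      c i * of_nat (\<beta> i) * of_real y ^ \<alpha> i * of_real s ^ (\<beta> i - 1)) (at s)"
    by (rule has_vector_derivative_real_field)
qed

lemma partial1_mono_sum:
  "partial1 (mono_sum I c \<alpha> \<beta>) = mono_sum I (\<lambda>i. c i * of_nat (\<alpha> i)) (\<lambda>i. \<alpha> i - 1) \<beta>"
  unfolding partial1_def by (simp add: vector_derivative_at[OF mono_sum_has_partial1])

lemma partial2_mono_sum:
  "partial2 (mono_sum I c \<alpha> \<beta>) = mono_sum I (\<lambda>i. c i * of_nat (\<beta> i)) \<alpha> (\<lambda>i. \<beta> i - 1)"
  unfolding partial2_def by (simp add: vector_derivative_at[OF mono_sum_has_partial2])

lemma Pk_iff_mono_sum:
  "f \<in> Pk k \<longleftrightarrow> (\<exists>c. f = mono_sum (SIGMA i:{..k}. {..k - i}) c fst snd)"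
proof -
  have eq: "(\<lambda>(x1, x2). \<Sum>i\<le>k. \<Sum>j\<le>k - i. c i j * complex_of_real x1 ^ i * complex_of_real x2 ^ j)
      = mono_sum (SIGMA i:{..k}. {..k - i}) (case_prod c) fst snd" for c
    by (simp add: mono_sum_def sum.Sigma case_prod_beta')
  show ?thesis
  proof
    assume "f \<in> Pk k"
    then show "\<exists>c. f = mono_sum (SIGMA i:{..k}. {..k - i}) c fst snd"
      unfolding Pk_def eq by blast
  next
    assume "\<exists>c. f = mono_sum (SIGMA i:{..k}. {..k - i}) c fst snd"
    then obtain c where "f = mono_sum (SIGMA i:{..k}. {..k - i}) (case_prod (curry c)) fst snd"
      by auto
    then show "f \<in> Pk k"
      unfolding Pk_def eq[symmetric] by blast
  qed
qed

lemma lin_space_Pk: "lin_space (Pk k)"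
  unfolding lin_space_def
proof (intro conjI ballI allI)
  let ?I = "SIGMA i:{..k}. {..k - i}"
  have "0 = mono_sum ?I (\<lambda>_. 0) fst snd"
    by (simp add: mono_sum_def zero_fun_def)
  then show "0 \<in> Pk k"
    unfolding Pk_iff_mono_sum by blast
  fix f g assume "f \<in> Pk k" "g \<in> Pk k"
  then obtain c d where "f = mono_sum ?I c fst snd" "g = mono_sum ?I d fst snd"
    unfolding Pk_iff_mono_sum by blast
  then have "f + g = mono_sum ?I (\<lambda>i. c i + d i) fst snd"
    by (simp add: mono_sum_def fun_eq_iff sum.distrib ring_distribs)
  then show "f + g \<in> Pk k"
    unfolding Pk_iff_mono_sum by blast
next
  let ?I = "SIGMA i:{..k}. {..k - i}"
  fix f a assume "f \<in> Pk k"
  then obtain c where "f = mono_sum ?I c fst snd"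
    unfolding Pk_iff_mono_sum by blast
  then have "(\<lambda>x. a * f x) = mono_sum ?I (\<lambda>i. a * c i) fst snd"
    by (simp add: mono_sum_def fun_eq_iff sum_distrib_left mult.assoc)
  then show "(\<lambda>x. a * f x) \<in> Pk k"
    unfolding Pk_iff_mono_sum by blast
qed

lemma monomial_in_Pk:
  assumes "i + j \<le> k"
  shows "(\<lambda>x. a * of_real (fst x) ^ i * of_real (snd x) ^ j) \<in> Pk k"
proof -
  let ?I = "SIGMA i:{..k}. {..k - i}"
  define g :: "nat \<times> nat \<Rightarrow> real \<times> real \<Rightarrow> complex"
    where "g ij x = of_real (fst x) ^ fst ij * of_real (snd x) ^ snd ij" for ij x
  have "mono_sum ?I (\<lambda>ij. if ij = (i, j) then a else 0) fst snd x
      = (\<Sum>ij\<in>?I. if ij = (i, j) then a * g ij x else 0)" for x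
    unfolding mono_sum_def g_def by (rule sum.cong) auto
  also have "\<dots> x = a * of_real (fst x) ^ i * of_real (snd x) ^ j" for x
    using assms by (simp add: sum.delta' g_def)
  finally show ?thesis
    unfolding Pk_iff_mono_sum by (metis (no_types, lifting) ext)
qed

lemma mono_sum_in_Pk:
  assumes "\<And>i. i \<in> I \<Longrightarrow> c i \<noteq> 0 \<Longrightarrow> \<alpha> i + \<beta> i \<le> k"
  shows "mono_sum I c \<alpha> \<beta> \<in> Pk k"
  unfolding mono_sum_def
proof (rule lin_space_sum[OF lin_space_Pk])
  fix i assume "i \<in> I"
  then show "(\<lambda>x. c i * of_real (fst x) ^ \<alpha> i * of_real (snd x) ^ \<beta> i) \<in> Pk k"
    using assms monomial_in_Pk lin_space_zero[OF lin_space_Pk]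
    by (cases "c i = 0") (auto simp: zero_fun_def)
qed

lemma Pk_has_partial1:
  assumes "f \<in> Pk k"
  shows "((\<lambda>t. f (t, y)) has_vector_derivative partial1 f (s, y)) (at s)"
proof -
  obtain c where f: "f = mono_sum (SIGMA i:{..k}. {..k - i}) c fst snd"
    using assms unfolding Pk_iff_mono_sum by blast
  show ?thesis
    unfolding f partial1_mono_sum by (rule mono_sum_has_partial1)
qed

lemma Pk_has_partial2:
  assumes "f \<in> Pk k"
  shows "((\<lambda>t. f (y, t)) has_vector_derivative partial2 f (y, s)) (at s)"
proof -
  obtain c where f: "f = mono_sum (SIGMA i:{..k}. {..k - i}) c fst snd"
    using assms unfolding Pk_iff_mono_sum by blast
  show ?thesis
    unfolding f partial2_mono_sum by (rule mono_sum_has_partial2)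
qed

lemma partial1_Pk: "f \<in> Pk k \<Longrightarrow> partial1 f \<in> Pk (k - 1)"
  unfolding Pk_iff_mono_sum[of f]
  by (auto simp: partial1_mono_sum intro!: mono_sum_in_Pk)

lemma partial2_Pk: "f \<in> Pk k \<Longrightarrow> partial2 f \<in> Pk (k - 1)"
  unfolding Pk_iff_mono_sum[of f]
  by (auto simp: partial2_mono_sum intro!: mono_sum_in_Pk)

lemma partial1_partial2_Pk: "f \<in> Pk k \<Longrightarrow> partial1 (partial2 f) = partial2 (partial1 f)"
  unfolding Pk_iff_mono_sum
  by (auto simp: partial1_mono_sum partial2_mono_sum mult_ac)

lemma lin_on_partial1: "lin_on partial1 (Pk k)"
  unfolding lin_on_def
proof (intro conjI ballI allI)
  fix f g assume "f \<in> Pk k" "g \<in> Pk k"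
  then show "partial1 (f + g) = partial1 f + partial1 g"
    by (auto simp: fun_eq_iff partial1_def [of "f + g"]
        intro!: vector_derivative_at has_vector_derivative_add Pk_has_partial1)
next
  fix f c assume "f \<in> Pk k"
  then show "partial1 (\<lambda>x. c * f x) = (\<lambda>x. c * partial1 f x)"
    by (auto simp: fun_eq_iff partial1_def [of "\<lambda>x. c * f x"]
        intro!: vector_derivative_at has_vector_derivative_mult_right Pk_has_partial1)
qed

lemma lin_on_partial2: "lin_on partial2 (Pk k)"
  unfolding lin_on_def
proof (intro conjI ballI allI)
  fix f g assume "f \<in> Pk k" "g \<in> Pk k"
  then show "partial2 (f + g) = partial2 f + partial2 g"
    by (auto simp: fun_eq_iff partial2_def [of "f + g"]
        intro!: vector_derivative_at has_vector_derivative_add Pk_has_partial2)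
next
  fix f c assume "f \<in> Pk k"
  then show "partial2 (\<lambda>x. c * f x) = (\<lambda>x. c * partial2 f x)"
    by (auto simp: fun_eq_iff partial2_def [of "\<lambda>x. c * f x"]
        intro!: vector_derivative_at has_vector_derivative_mult_right Pk_has_partial2)
qed

section \<open>Algebraic tensor products\<close>

definition map_z :: "((complex \<Rightarrow> complex) \<Rightarrow> (complex \<Rightarrow> complex)) \<Rightarrow> sfun \<Rightarrow> sfun" where
  "map_z L F = (\<lambda>z x. L (\<lambda>z'. F z' x) z)"

definition map_x :: "((real \<times> real \<Rightarrow> complex) \<Rightarrow> (real \<times> real \<Rightarrow> complex)) \<Rightarrow> sfun \<Rightarrow> sfun" where
  "map_x T F = (\<lambda>z. T (F z))"

lemma d1_eq_map_x: "d1 = map_x partial1"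
  by (simp add: fun_eq_iff d1_def map_x_def partial1_def)

lemma d2_eq_map_x: "d2 = map_x partial2"
  by (simp add: fun_eq_iff d2_def map_x_def partial2_def)

lemma tensorP_E:
  assumes "F \<in> tensorP A B"
  obtains n :: nat and a b where "\<And>k. k < n \<Longrightarrow> a k \<in> A" "\<And>k. k < n \<Longrightarrow> b k \<in> B"
    "F = (\<lambda>z x. \<Sum>k<n. a k z * b k x)"
proof -
  from assms obtain n :: nat and a b where "\<forall>k<n. a k \<in> A \<and> b k \<in> B" "F = (\<lambda>z x. \<Sum>k<n. a k z * b k x)"
    unfolding tensorP_def by blast
  then show ?thesis
    using that by blast
qed

lemma tensorP_I:
  fixes n :: nat
  shows "(\<And>k. k < n \<Longrightarrow> a k \<in> A) \<Longrightarrow> (\<And>k. k < n \<Longrightarrow> b k \<in> B) \<Longrightarrow>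
    (\<lambda>z x. \<Sum>k<n. a k z * b k x) \<in> tensorP A B"
  unfolding tensorP_def by (intro CollectI exI[of _ n] exI[of _ a] exI[of _ b]) auto

lemma tensorP_zero: "0 \<in> tensorP A B"
  unfolding tensorP_def by (auto simp: zero_fun_def intro!: exI[of _ 0])

lemma tensorP_add:
  assumes "F \<in> tensorP A B" "G \<in> tensorP A B"
  shows "F + G \<in> tensorP A B"
proof -
  obtain n :: nat and a b where ab: "\<And>k. k < n \<Longrightarrow> a k \<in> A" "\<And>k. k < n \<Longrightarrow> b k \<in> B"
    and F: "F = (\<lambda>z x. \<Sum>k<n. a k z * b k x)"
    using tensorP_E[OF assms(1)] by blast
  obtain m :: nat and a' b' where ab': "\<And>k. k < m \<Longrightarrow> a' k \<in> A" "\<And>k. k < m \<Longrightarrow> b' k \<in> B"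
    and G: "G = (\<lambda>z x. \<Sum>k<m. a' k z * b' k x)"
    using tensorP_E[OF assms(2)] by blast
  define a'' where "a'' k = (if k < n then a k else a' (k - n))" for k :: nat
  define b'' where "b'' k = (if k < n then b k else b' (k - n))" for k :: nat
  have "(\<Sum>k<n + m. a'' k z * b'' k x)
      = (\<Sum>k<n. a'' k z * b'' k x) + (\<Sum>k<m. a'' (k + n) z * b'' (k + n) x)" for z x
    by (induction m) (simp_all add: add_ac)
  then have "F + G = (\<lambda>z x. \<Sum>k<n + m. a'' k z * b'' k x)"
    by (simp add: F G fun_eq_iff a''_def b''_def)
  moreover have "a'' k \<in> A" "b'' k \<in> B" if "k < n + m" for k
    using that ab ab' by (auto simp: a''_def b''_def)
  ultimately show ?thesis
    by (simp add: tensorP_I)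
qed

lemma tensorP_uminus:
  assumes "lin_space A" "F \<in> tensorP A B"
  shows "- F \<in> tensorP A B"
proof -
  obtain n :: nat and a b where ab: "\<And>k. k < n \<Longrightarrow> a k \<in> A" "\<And>k. k < n \<Longrightarrow> b k \<in> B"
    and F: "F = (\<lambda>z x. \<Sum>k<n. a k z * b k x)"
    using tensorP_E[OF assms(2)] by blast
  have "- F = (\<lambda>z x. \<Sum>k<n. (- a k) z * b k x)"
    by (simp add: F fun_eq_iff sum_negf)
  also have "\<dots> \<in> tensorP A B"
    using ab lin_space_uminus[OF assms(1)] by (intro tensorP_I) (auto simp: fun_Compl_def)
  finally show ?thesis .
qed

lemma tensorP_diff:
  "lin_space A \<Longrightarrow> F \<in> tensorP A B \<Longrightarrow> G \<in> tensorP A B \<Longrightarrow> F - G \<in> tensorP A B"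
  using tensorP_add tensorP_uminus by (metis diff_conv_add_uminus)

lemma tensorP_slice_z:
  assumes "lin_space A" "F \<in> tensorP A B"
  shows "(\<lambda>z. F z x) \<in> A"
proof -
  obtain n :: nat and a b where "\<And>k. k < n \<Longrightarrow> a k \<in> A" and F: "F = (\<lambda>z x. \<Sum>k<n. a k z * b k x)"
    using tensorP_E[OF assms(2)] by blast
  then have "(\<lambda>z. \<Sum>k<n. b k x * a k z) \<in> A"
    by (auto intro!: lin_space_sum lin_space_scale assms(1))
  then show ?thesis
    by (simp add: F mult.commute)
qed

lemma tensorP_slice_x:
  assumes "lin_space B" "F \<in> tensorP A B"
  shows "F z \<in> B"
proof -
  obtain n :: nat and a b where "\<And>k. k < n \<Longrightarrow> b k \<in> B" and F: "F = (\<lambda>z x. \<Sum>k<n. a k z * b k x)"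
    using tensorP_E[OF assms(2)] by blast
  then show ?thesis
    by (auto intro!: lin_space_sum lin_space_scale assms(1))
qed

lemma map_z_tensor_sum:
  assumes "lin_space A" "lin_on L A" "\<And>k. k < n \<Longrightarrow> a k \<in> A"
  shows "map_z L (\<lambda>z x. \<Sum>k<n. a k z * b k x) = (\<lambda>z x. \<Sum>k<n. L (a k) z * b k x)"
proof (rule ext, rule ext)
  fix z x
  have "L (\<lambda>z'. \<Sum>k<n. b k x * a k z') = (\<lambda>z'. \<Sum>k<n. b k x * L (a k) z')"
    using assms by (intro lin_on_sum) auto
  then show "map_z L (\<lambda>z x. \<Sum>k<n. a k z * b k x) z x = (\<Sum>k<n. L (a k) z * b k x)"
    by (simp add: map_z_def mult.commute)
qed

lemma map_x_tensor_sum: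
  assumes "lin_space B" "lin_on T B" "\<And>k. k < n \<Longrightarrow> b k \<in> B"
  shows "map_x T (\<lambda>z x. \<Sum>k<n. a k z * b k x) = (\<lambda>z x. \<Sum>k<n. a k z * T (b k) x)"
proof (rule ext)
  fix z
  show "map_x T (\<lambda>z x. \<Sum>k<n. a k z * b k x) z = (\<lambda>x. \<Sum>k<n. a k z * T (b k) x)"
    unfolding map_x_def using assms by (intro lin_on_sum) auto
qed

lemma map_z_in_tensorP:
  assumes "lin_space A" "lin_on L A" "\<And>f. f \<in> A \<Longrightarrow> L f \<in> A'" "F \<in> tensorP A B"
  shows "map_z L F \<in> tensorP A' B"
proof -
  obtain n :: nat and a b where "\<And>k. k < n \<Longrightarrow> a k \<in> A" "\<And>k. k < n \<Longrightarrow> b k \<in> B"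
    and "F = (\<lambda>z x. \<Sum>k<n. a k z * b k x)"
    using tensorP_E[OF assms(4)] by blast
  then show ?thesis
    by (simp add: map_z_tensor_sum[OF assms(1,2)] assms(3) tensorP_I)
qed

lemma map_x_in_tensorP:
  assumes "lin_space B" "lin_on T B" "\<And>f. f \<in> B \<Longrightarrow> T f \<in> B'" "F \<in> tensorP A B"
  shows "map_x T F \<in> tensorP A B'"
proof -
  obtain n :: nat and a b where "\<And>k. k < n \<Longrightarrow> a k \<in> A" "\<And>k. k < n \<Longrightarrow> b k \<in> B"
    and "F = (\<lambda>z x. \<Sum>k<n. a k z * b k x)"
    using tensorP_E[OF assms(4)] by blast
  then show ?thesis
    by (simp add: map_x_tensor_sum[OF assms(1,2)] assms(3) tensorP_I)
qed

lemma map_z_map_x: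
  assumes "lin_space A" "lin_on L A" "lin_space B" "lin_on T B" "F \<in> tensorP A B"
  shows "map_z L (map_x T F) = map_x T (map_z L F)"
proof -
  obtain n :: nat and a b where "\<And>k. k < n \<Longrightarrow> a k \<in> A" "\<And>k. k < n \<Longrightarrow> b k \<in> B"
    and "F = (\<lambda>z x. \<Sum>k<n. a k z * b k x)"
    using tensorP_E[OF assms(5)] by blast
  then show ?thesis
    by (simp add: map_z_tensor_sum[OF assms(1,2)] map_x_tensor_sum[OF assms(3,4)])
qed

lemma map_x_map_x:
  assumes "lin_space B" "\<And>f. f \<in> B \<Longrightarrow> T (S f) = S (T f)" "F \<in> tensorP A B"
  shows "map_x T (map_x S F) = map_x S (map_x T F)"
  using assms tensorP_slice_x by (simp add: map_x_def)

lemma map_z_map_z_inverse: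
  assumes "lin_space A" "\<And>f. f \<in> A \<Longrightarrow> L' (L f) = f" "F \<in> tensorP A B"
  shows "map_z L' (map_z L F) = F"
  using assms tensorP_slice_z by (simp add: map_z_def)

lemma map_z_add:
  assumes "lin_space A" "lin_on L A" "F \<in> tensorP A B" "G \<in> tensorP A B"
  shows "map_z L (F + G) = map_z L F + map_z L G"
  using lin_on_add[OF assms(2) tensorP_slice_z[OF assms(1,3)] tensorP_slice_z[OF assms(1,4)]]
  by (simp add: map_z_def fun_eq_iff plus_fun_def)

lemma map_z_uminus:
  assumes "lin_space A" "lin_on L A" "F \<in> tensorP A B"
  shows "map_z L (- F) = - map_z L F"
  using lin_on_uminus[OF assms(2) tensorP_slice_z[OF assms(1,3)]]
  by (simp add: map_z_def fun_eq_iff fun_Compl_def)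

lemma map_z_diff:
  assumes "lin_space A" "lin_on L A" "F \<in> tensorP A B" "G \<in> tensorP A B"
  shows "map_z L (F - G) = map_z L F - map_z L G"
  using map_z_add[OF assms(1,2,3) tensorP_uminus[OF assms(1,4)]] map_z_uminus[OF assms(1,2,4)]
  by simp

lemma map_x_add:
  assumes "lin_space B" "lin_on T B" "F \<in> tensorP A B" "G \<in> tensorP A B"
  shows "map_x T (F + G) = map_x T F + map_x T G"
  using lin_on_add[OF assms(2) tensorP_slice_x[OF assms(1,3)] tensorP_slice_x[OF assms(1,4)]]
  by (simp add: map_x_def fun_eq_iff)

lemma map_x_uminus:
  assumes "lin_space B" "lin_on T B" "F \<in> tensorP A B"
  shows "map_x T (- F) = - map_x T F"
  using lin_on_uminus[OF assms(2) tensorP_slice_x[OF assms(1,3)]]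
  by (simp add: map_x_def fun_eq_iff)

lemma map_x_diff:
  assumes "lin_space A" "lin_space B" "lin_on T B" "F \<in> tensorP A B" "G \<in> tensorP A B"
  shows "map_x T (F - G) = map_x T F - map_x T G"
  using map_x_add[OF assms(2,3,4) tensorP_uminus[OF assms(1,5)]] map_x_uminus[OF assms(2,3,5)]
  by simp

section \<open>The \<open>\<xi>\<close>-factor\<close>

lemma PiN_isCont: "U \<in> PiN N \<Longrightarrow> isCont U z"
  unfolding PiN_def by (auto intro!: continuous_intros)

lemma lin_space_PiN: "lin_space (PiN N)"
  unfolding lin_space_def
proof (intro conjI ballI allI)
  show "0 \<in> PiN N"
    unfolding PiN_def by (auto simp: fun_eq_iff intro!: exI[where x="\<lambda>_. 0"])
next
  fix f g assume "f \<in> PiN N" "g \<in> PiN N"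
  then obtain c d where "f = (\<lambda>z. \<Sum>i\<le>N. c i * z ^ i)" "g = (\<lambda>z. \<Sum>i\<le>N. d i * z ^ i)"
    unfolding PiN_def by blast
  then show "f + g \<in> PiN N"
    unfolding PiN_def
    by (auto simp: fun_eq_iff sum.distrib ring_distribs intro!: exI[where x="\<lambda>i. c i + d i"])
next
  fix f a assume "f \<in> PiN N"
  then obtain c where "f = (\<lambda>z. \<Sum>i\<le>N. c i * z ^ i)"
    unfolding PiN_def by blast
  then show "(\<lambda>z. a * f z) \<in> PiN N"
    unfolding PiN_def
    by (auto simp: fun_eq_iff sum_distrib_left mult.assoc intro!: exI[where x="\<lambda>i. a * c i"])
qed

lemma affine_factor_unique:
  fixes U U' :: "complex \<Rightarrow> complex"
  assumes "isCont U s" "isCont U' s" "\<And>z. u + (z - s) * U z = u' + (z - s) * U' z"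
  shows "u = u' \<and> U = U'"
proof
  show u: "u = u'"
    using assms(3)[of s] by simp
  have off_s: "U z = U' z" if "z \<noteq> s" for z
    using assms(3)[of z] that by (simp add: u)
  have "((\<lambda>z. U z - U' z) \<longlongrightarrow> U s - U' s) (at s)"
    using assms(1,2) by (intro tendsto_diff) (simp_all add: isCont_def)
  moreover have "((\<lambda>z. U z - U' z) \<longlongrightarrow> 0) (at s)"
    by (rule tendsto_eventually) (auto simp: eventually_at_filter off_s)
  ultimately have "U s - U' s = 0"
    by (rule tendsto_unique[OF at_neq_bot])
  with off_s show "U = U'"
    by (metis eq_iff_diff_eq_0 ext)
qed

lemma lin_space_affine_family: "lin_space {(\<lambda>z. (u + (z - s) * U z) / d) | u U. U \<in> PiN N}"
  unfolding lin_space_def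
proof (intro conjI ballI allI)
  have "0 = (\<lambda>z. (0 + (z - s) * 0 z) / d)"
    by (simp add: fun_eq_iff)
  then show "0 \<in> {(\<lambda>z. (u + (z - s) * U z) / d) | u U. U \<in> PiN N}"
    using lin_space_zero[OF lin_space_PiN] by blast
next
  fix f g assume "f \<in> {(\<lambda>z. (u + (z - s) * U z) / d) | u U. U \<in> PiN N}"
    "g \<in> {(\<lambda>z. (u + (z - s) * U z) / d) | u U. U \<in> PiN N}"
  then obtain u U u' U' where U: "U \<in> PiN N" "U' \<in> PiN N"
    and fg: "f = (\<lambda>z. (u + (z - s) * U z) / d)" "g = (\<lambda>z. (u' + (z - s) * U' z) / d)"
    by blast
  have "f + g = (\<lambda>z. ((u + u') + (z - s) * (U + U') z) / d)"
    by (simp add: fg fun_eq_iff add_divide_distrib distrib_left add_ac)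
  then show "f + g \<in> {(\<lambda>z. (u + (z - s) * U z) / d) | u U. U \<in> PiN N}"
    using lin_space_add[OF lin_space_PiN U] by blast
next
  fix f a assume "f \<in> {(\<lambda>z. (u + (z - s) * U z) / d) | u U. U \<in> PiN N}"
  then obtain u U where U: "U \<in> PiN N" and f: "f = (\<lambda>z. (u + (z - s) * U z) / d)"
    by blast
  have "(\<lambda>z. a * f z) = (\<lambda>z. (a * u + (z - s) * (a * U z)) / d)"
    by (simp add: f fun_eq_iff algebra_simps)
  then show "(\<lambda>z. a * f z) \<in> {(\<lambda>z. (u + (z - s) * U z) / d) | u U. U \<in> PiN N}"
    unfolding mem_Collect_eq using lin_space_scale[OF lin_space_PiN U, of a]
    by (intro exI[of _ "a * u"] exI[of _ "\<lambda>z. a * U z"] conjI)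
qed

lemma lin_space_Wxi: "lin_space (Wxi \<kappa>0 N)"
proof -
  have "Wxi \<kappa>0 N = {(\<lambda>z. (u + (z - 1) * U z) / (2 * (\<i> * \<kappa>0))) | u U. U \<in> PiN N}"
    by (simp add: Wxi_def Tminus_def)
  then show ?thesis
    by (simp only: lin_space_affine_family)
qed

lemma lin_space_Wxi': "lin_space (Wxi' N)"
proof -
  have "Wxi' N = {(\<lambda>z. (u + (z - (- 1)) * U z) / 2) | u U. U \<in> PiN N}"
    by (simp add: Wxi'_def Tplus_def)
  then show ?thesis
    by (simp only: lin_space_affine_family)
qed

lemma dxi_Tminus:
  assumes "\<kappa>0 \<noteq> 0" "U \<in> PiN N"
  shows "dxi \<kappa>0 N (\<lambda>z. Tminus u U z / (\<i> * \<kappa>0)) = Tplus u U"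
  unfolding dxi_def
proof (rule the_equality)
  show "\<exists>u' U'. U' \<in> PiN N \<and> (\<lambda>z. Tminus u U z / (\<i> * \<kappa>0)) = (\<lambda>z. Tminus u' U' z / (\<i> * \<kappa>0))
      \<and> Tplus u U = Tplus u' U'"
    using assms(2) by blast
next
  fix g assume "\<exists>u' U'. U' \<in> PiN N \<and> (\<lambda>z. Tminus u U z / (\<i> * \<kappa>0)) = (\<lambda>z. Tminus u' U' z / (\<i> * \<kappa>0))
      \<and> g = Tplus u' U'"
  then obtain u' U' where U': "U' \<in> PiN N" and g: "g = Tplus u' U'"
    and eq: "(\<lambda>z. Tminus u U z / (\<i> * \<kappa>0)) = (\<lambda>z. Tminus u' U' z / (\<i> * \<kappa>0))"
    by blast
  have "u + (z - 1) * U z = u' + (z - 1) * U' z" for z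
    using fun_cong[OF eq, of z] unfolding Tminus_def
    by (simp only: divide_cancel_right) (simp add: assms(1))
  then have "u = u' \<and> U = U'"
    using affine_factor_unique PiN_isCont assms(2) U' by blast
  then show "g = Tplus u U"
    by (simp add: g)
qed

lemma Wxi_E:
  assumes "f \<in> Wxi \<kappa>0 N"
  obtains u U where "U \<in> PiN N" "f = (\<lambda>z. Tminus u U z / (\<i> * \<kappa>0))"
  using assms unfolding Wxi_def by blast

lemma lin_on_dxi:
  assumes "\<kappa>0 \<noteq> 0"
  shows "lin_on (dxi \<kappa>0 N) (Wxi \<kappa>0 N)"
  unfolding lin_on_def
proof (intro conjI ballI allI)
  fix f g assume "f \<in> Wxi \<kappa>0 N" "g \<in> Wxi \<kappa>0 N"
  then obtain u U u' U' where U: "U \<in> PiN N" "U' \<in> PiN N"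
    and fg: "f = (\<lambda>z. Tminus u U z / (\<i> * \<kappa>0))" "g = (\<lambda>z. Tminus u' U' z / (\<i> * \<kappa>0))"
    by (metis Wxi_E)
  have "f + g = (\<lambda>z. Tminus (u + u') (U + U') z / (\<i> * \<kappa>0))"
    by (simp add: fg fun_eq_iff Tminus_def add_divide_distrib distrib_left add_ac)
  moreover have "Tplus (u + u') (U + U') = Tplus u U + Tplus u' U'"
    by (simp add: fun_eq_iff Tplus_def add_divide_distrib distrib_left add_ac)
  ultimately show "dxi \<kappa>0 N (f + g) = dxi \<kappa>0 N f + dxi \<kappa>0 N g"
    using U lin_space_add[OF lin_space_PiN U] by (simp add: fg dxi_Tminus assms)
next
  fix f c assume "f \<in> Wxi \<kappa>0 N"
  then obtain u U where U: "U \<in> PiN N" and f: "f = (\<lambda>z. Tminus u U z / (\<i> * \<kappa>0))"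
    by (metis Wxi_E)
  have "(\<lambda>z. c * f z) = (\<lambda>z. Tminus (c * u) (\<lambda>z. c * U z) z / (\<i> * \<kappa>0))"
    by (simp add: f fun_eq_iff Tminus_def algebra_simps)
  moreover have "Tplus (c * u) (\<lambda>z. c * U z) = (\<lambda>z. c * Tplus u U z)"
    by (simp add: fun_eq_iff Tplus_def algebra_simps)
  ultimately show "dxi \<kappa>0 N (\<lambda>z. c * f z) = (\<lambda>z. c * dxi \<kappa>0 N f z)"
    using U lin_space_scale[OF lin_space_PiN U] by (simp add: f dxi_Tminus assms)
qed

lemma bij_betw_dxi:
  assumes "\<kappa>0 \<noteq> 0"
  shows "bij_betw (dxi \<kappa>0 N) (Wxi \<kappa>0 N) (Wxi' N)"
proof (rule bij_betw_imageI)
  show "inj_on (dxi \<kappa>0 N) (Wxi \<kappa>0 N)"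
  proof (rule inj_onI)
    fix f g assume "f \<in> Wxi \<kappa>0 N" "g \<in> Wxi \<kappa>0 N" and eq: "dxi \<kappa>0 N f = dxi \<kappa>0 N g"
    then obtain u U u' U' where U: "U \<in> PiN N" "U' \<in> PiN N"
      and fg: "f = (\<lambda>z. Tminus u U z / (\<i> * \<kappa>0))" "g = (\<lambda>z. Tminus u' U' z / (\<i> * \<kappa>0))"
      by (metis Wxi_E)
    have "Tplus u U z = Tplus u' U' z" for z
      using fun_cong[OF eq, of z] U by (simp add: fg dxi_Tminus assms)
    then have "u + (z - (- 1)) * U z = u' + (z - (- 1)) * U' z" for z
      unfolding Tplus_def by (simp only: divide_cancel_right diff_minus_eq_add) simp
    then have "u = u' \<and> U = U'"
      using affine_factor_unique PiN_isCont U by blast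
    then show "f = g"
      by (simp add: fg)
  qed
  show "dxi \<kappa>0 N ` Wxi \<kappa>0 N = Wxi' N"
  proof
    show "dxi \<kappa>0 N ` Wxi \<kappa>0 N \<subseteq> Wxi' N"
    proof
      fix g assume "g \<in> dxi \<kappa>0 N ` Wxi \<kappa>0 N"
      then obtain u U where "U \<in> PiN N" "g = Tplus u U"
        by (auto simp: dxi_Tminus assms elim!: Wxi_E)
      then show "g \<in> Wxi' N"
        unfolding Wxi'_def by blast
    qed
  next
    show "Wxi' N \<subseteq> dxi \<kappa>0 N ` Wxi \<kappa>0 N"
    proof
      fix g assume "g \<in> Wxi' N"
      then obtain u U where "U \<in> PiN N" "g = Tplus u U"
        unfolding Wxi'_def by blast
      then show "g \<in> dxi \<kappa>0 N ` Wxi \<kappa>0 N"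
        unfolding Wxi_def
        by (intro image_eqI[of _ _ "\<lambda>z. Tminus u U z / (\<i> * \<kappa>0)"]) (auto simp: dxi_Tminus assms)
    qed
  qed
qed

section \<open>The tensor-product complex\<close>

lemma d1_in_tensorP: "F \<in> tensorP A (Pk k) \<Longrightarrow> d1 F \<in> tensorP A (Pk (k - 1))"
  unfolding d1_eq_map_x by (rule map_x_in_tensorP[OF lin_space_Pk lin_on_partial1 partial1_Pk])

lemma d2_in_tensorP: "F \<in> tensorP A (Pk k) \<Longrightarrow> d2 F \<in> tensorP A (Pk (k - 1))"
  unfolding d2_eq_map_x by (rule map_x_in_tensorP[OF lin_space_Pk lin_on_partial2 partial2_Pk])

lemma d1_d2_commute: "F \<in> tensorP A (Pk k) \<Longrightarrow> d1 (d2 F) = d2 (d1 F)"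
  unfolding d1_eq_map_x d2_eq_map_x
  by (rule map_x_map_x[of "Pk k" partial1 partial2, OF lin_space_Pk partial1_partial2_Pk])

lemma d1_map_z:
  "lin_space A \<Longrightarrow> lin_on L A \<Longrightarrow> F \<in> tensorP A (Pk k) \<Longrightarrow> d1 (map_z L F) = map_z L (d1 F)"
  unfolding d1_eq_map_x by (rule map_z_map_x[OF _ _ lin_space_Pk lin_on_partial1, symmetric])

lemma d2_map_z:
  "lin_space A \<Longrightarrow> lin_on L A \<Longrightarrow> F \<in> tensorP A (Pk k) \<Longrightarrow> d2 (map_z L F) = map_z L (d2 F)"
  unfolding d2_eq_map_x by (rule map_z_map_x[OF _ _ lin_space_Pk lin_on_partial2, symmetric])

lemma d1_diff:
  "lin_space A \<Longrightarrow> F \<in> tensorP A (Pk k) \<Longrightarrow> G \<in> tensorP A (Pk k) \<Longrightarrow> d1 (F - G) = d1 F - d1 G"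
  unfolding d1_eq_map_x by (rule map_x_diff[OF _ lin_space_Pk lin_on_partial1])

lemma d2_diff:
  "lin_space A \<Longrightarrow> F \<in> tensorP A (Pk k) \<Longrightarrow> G \<in> tensorP A (Pk k) \<Longrightarrow> d2 (F - G) = d2 F - d2 G"
  unfolding d2_eq_map_x by (rule map_x_diff[OF _ lin_space_Pk lin_on_partial2])

lemma d1_uminus: "F \<in> tensorP A (Pk k) \<Longrightarrow> d1 (- F) = - d1 F"
  unfolding d1_eq_map_x by (rule map_x_uminus[OF lin_space_Pk lin_on_partial1])

lemma d1_zero: "d1 0 = 0" and d2_zero: "d2 0 = 0"
  by (simp_all add: d1_def d2_def fun_eq_iff)

definition grad_op :: "((complex \<Rightarrow> complex) \<Rightarrow> complex \<Rightarrow> complex) \<Rightarrow> sfun \<Rightarrow> sfun \<times> sfun \<times> sfun" where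
  "grad_op L F = (map_z L F, d1 F, d2 F)"

definition curl_op :: "((complex \<Rightarrow> complex) \<Rightarrow> complex \<Rightarrow> complex) \<Rightarrow> sfun \<times> sfun \<times> sfun \<Rightarrow> sfun \<times> sfun \<times> sfun" where
  "curl_op L V = (case V of (u, v1, v2) \<Rightarrow> (d1 v2 - d2 v1, d2 u - map_z L v2, map_z L v1 - d1 u))"

definition div_op :: "((complex \<Rightarrow> complex) \<Rightarrow> complex \<Rightarrow> complex) \<Rightarrow> sfun \<times> sfun \<times> sfun \<Rightarrow> sfun" where
  "div_op L Q = (case Q of (q, w1, w2) \<Rightarrow> map_z L q + d1 w1 + d2 w2)"

locale xi_isomorphism =
  fixes L :: "(complex \<Rightarrow> complex) \<Rightarrow> complex \<Rightarrow> complex" and A A' :: "(complex \<Rightarrow> complex) set"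
  assumes lin_space_A: "lin_space A" and lin_space_A': "lin_space A'"
    and lin_on_L: "lin_on L A" and bij_L: "bij_betw L A A'"
begin

abbreviation Linv :: "(complex \<Rightarrow> complex) \<Rightarrow> complex \<Rightarrow> complex" where
  "Linv \<equiv> inv_into A L"

lemma L_in: "f \<in> A \<Longrightarrow> L f \<in> A'"
  by (rule bij_betw_apply[OF bij_L])

lemma Linv_in: "g \<in> A' \<Longrightarrow> Linv g \<in> A"
  by (rule bij_betw_apply[OF bij_betw_inv_into[OF bij_L]])

lemma Linv_L: "f \<in> A \<Longrightarrow> Linv (L f) = f"
  using bij_L by (simp add: bij_betw_def)

lemma L_Linv: "g \<in> A' \<Longrightarrow> L (Linv g) = g"
  using bij_L by (simp add: bij_betw_def f_inv_into_f)

lemma inj_on_L: "inj_on L A"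
  using bij_L by (simp add: bij_betw_def)

lemma lin_on_Linv: "lin_on Linv A'"
  unfolding lin_on_def
proof (intro conjI ballI allI)
  fix f g assume f: "f \<in> A'" and g: "g \<in> A'"
  have "L (Linv f + Linv g) = L (Linv (f + g))"
    using f g lin_space_add[OF lin_space_A' f g] Linv_in
    by (simp add: lin_on_add[OF lin_on_L] L_Linv)
  then show "Linv (f + g) = Linv f + Linv g"
    using inj_onD[OF inj_on_L] f g Linv_in lin_space_add[OF lin_space_A] lin_space_add[OF lin_space_A' f g]
    by metis
next
  fix f c assume f: "f \<in> A'"
  have "L (\<lambda>z. c * Linv f z) = L (Linv (\<lambda>z. c * f z))"
    using f lin_space_scale[OF lin_space_A' f] Linv_in
    by (simp add: lin_on_scale[OF lin_on_L] L_Linv)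
  then show "Linv (\<lambda>z. c * f z) = (\<lambda>z. c * Linv f z)"
    using inj_onD[OF inj_on_L] f Linv_in lin_space_scale[OF lin_space_A] lin_space_scale[OF lin_space_A' f]
    by metis
qed

lemma map_z_L_tensorP: "F \<in> tensorP A B \<Longrightarrow> map_z L F \<in> tensorP A' B"
  by (rule map_z_in_tensorP[OF lin_space_A lin_on_L L_in])

lemma map_z_Linv_tensorP: "G \<in> tensorP A' B \<Longrightarrow> map_z Linv G \<in> tensorP A B"
  by (rule map_z_in_tensorP[OF lin_space_A' lin_on_Linv Linv_in])

lemma map_z_Linv_L: "F \<in> tensorP A B \<Longrightarrow> map_z Linv (map_z L F) = F"
  by (rule map_z_map_z_inverse[of A Linv L, OF lin_space_A Linv_L])

lemma map_z_L_Linv: "G \<in> tensorP A' B \<Longrightarrow> map_z L (map_z Linv G) = G"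
  by (rule map_z_map_z_inverse[of A' L Linv, OF lin_space_A' L_Linv])

lemma grad_exact:
  "grad_op L ` tensorP A (Pk m) =
    {V \<in> tensorP A' (Pk m) \<times> tensorP A (Pk (m - 1)) \<times> tensorP A (Pk (m - 1)). curl_op L V = (0, 0, 0)}"
proof (intro set_eqI iffI)
  fix V assume "V \<in> grad_op L ` tensorP A (Pk m)"
  then obtain F where F: "F \<in> tensorP A (Pk m)" and V: "V = grad_op L F"
    by blast
  have "V \<in> tensorP A' (Pk m) \<times> tensorP A (Pk (m - 1)) \<times> tensorP A (Pk (m - 1))"
    using map_z_L_tensorP[OF F] d1_in_tensorP[OF F] d2_in_tensorP[OF F] by (simp add: V grad_op_def)
  moreover have "curl_op L V = (0, 0, 0)"
    by (simp add: V grad_op_def curl_op_def d1_d2_commute[OF F]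
        d1_map_z[OF lin_space_A lin_on_L F] d2_map_z[OF lin_space_A lin_on_L F])
  ultimately show "V \<in> {V \<in> tensorP A' (Pk m) \<times> tensorP A (Pk (m - 1)) \<times> tensorP A (Pk (m - 1)).
      curl_op L V = (0, 0, 0)}"
    by blast
next
  fix V assume "V \<in> {V \<in> tensorP A' (Pk m) \<times> tensorP A (Pk (m - 1)) \<times> tensorP A (Pk (m - 1)).
      curl_op L V = (0, 0, 0)}"
  then obtain u v1 v2 where V: "V = (u, v1, v2)" and u: "u \<in> tensorP A' (Pk m)"
    and v: "v1 \<in> tensorP A (Pk (m - 1))" "v2 \<in> tensorP A (Pk (m - 1))"
    and curl: "curl_op L (u, v1, v2) = (0, 0, 0)"
    by auto
  from curl have "d1 u = map_z L v1" "d2 u = map_z L v2"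
    by (simp_all add: curl_op_def)
  then have "grad_op L (map_z Linv u) = V"
    by (simp add: V grad_op_def map_z_L_Linv[OF u] map_z_Linv_L[OF v(1)] map_z_Linv_L[OF v(2)]
        d1_map_z[OF lin_space_A' lin_on_Linv u] d2_map_z[OF lin_space_A' lin_on_Linv u])
  then show "V \<in> grad_op L ` tensorP A (Pk m)"
    using map_z_Linv_tensorP[OF u] by blast
qed

lemma div_curl:
  assumes u: "u \<in> tensorP A' (Pk m)" and v: "v1 \<in> tensorP A (Pk (m - 1))" "v2 \<in> tensorP A (Pk (m - 1))"
  shows "div_op L (curl_op L (u, v1, v2)) = 0"
proof -
  have "div_op L (curl_op L (u, v1, v2))
      = (map_z L (d1 v2) - map_z L (d2 v1)) + (d1 (d2 u) - d1 (map_z L v2)) + (d2 (map_z L v1) - d2 (d1 u))"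
    by (simp add: div_op_def curl_op_def
        map_z_diff[OF lin_space_A lin_on_L d1_in_tensorP[OF v(2)] d2_in_tensorP[OF v(1)]]
        d1_diff[OF lin_space_A' d2_in_tensorP[OF u] map_z_L_tensorP[OF v(2)]]
        d2_diff[OF lin_space_A' map_z_L_tensorP[OF v(1)] d1_in_tensorP[OF u]])
  also have "\<dots> = 0"
    by (simp add: d1_d2_commute[OF u] d1_map_z[OF lin_space_A lin_on_L v(2)]
        d2_map_z[OF lin_space_A lin_on_L v(1)])
  finally show ?thesis .
qed

lemma curl_exact:
  "curl_op L ` (tensorP A' (Pk m) \<times> tensorP A (Pk (m - 1)) \<times> tensorP A (Pk (m - 1))) =
    {Q \<in> tensorP A (Pk (m - 2)) \<times> tensorP A' (Pk (m - 1)) \<times> tensorP A' (Pk (m - 1)). div_op L Q = 0}"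
proof (intro set_eqI iffI)
  have m2: "m - 1 - 1 = m - 2"
    by simp
  fix Q assume "Q \<in> curl_op L ` (tensorP A' (Pk m) \<times> tensorP A (Pk (m - 1)) \<times> tensorP A (Pk (m - 1)))"
  then obtain u v1 v2 where Q: "Q = curl_op L (u, v1, v2)" and u: "u \<in> tensorP A' (Pk m)"
    and v: "v1 \<in> tensorP A (Pk (m - 1))" "v2 \<in> tensorP A (Pk (m - 1))"
    by auto
  have "d1 v2 - d2 v1 \<in> tensorP A (Pk (m - 2))"
    using tensorP_diff[OF lin_space_A d1_in_tensorP[OF v(2)] d2_in_tensorP[OF v(1)]] by (simp only: m2)
  moreover have "d2 u - map_z L v2 \<in> tensorP A' (Pk (m - 1))" "map_z L v1 - d1 u \<in> tensorP A' (Pk (m - 1))"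
    using tensorP_diff[OF lin_space_A' d2_in_tensorP[OF u] map_z_L_tensorP[OF v(2)]]
      tensorP_diff[OF lin_space_A' map_z_L_tensorP[OF v(1)] d1_in_tensorP[OF u]] by simp_all
  ultimately show "Q \<in> {Q \<in> tensorP A (Pk (m - 2)) \<times> tensorP A' (Pk (m - 1)) \<times> tensorP A' (Pk (m - 1)).
      div_op L Q = 0}"
    using div_curl[OF u v] by (simp add: Q curl_op_def)
next
  have m2: "m - 1 - 1 = m - 2"
    by simp
  fix Q assume "Q \<in> {Q \<in> tensorP A (Pk (m - 2)) \<times> tensorP A' (Pk (m - 1)) \<times> tensorP A' (Pk (m - 1)).
      div_op L Q = 0}"
  then obtain q w1 w2 where Q: "Q = (q, w1, w2)" and q: "q \<in> tensorP A (Pk (m - 2))"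
    and w: "w1 \<in> tensorP A' (Pk (m - 1))" "w2 \<in> tensorP A' (Pk (m - 1))"
    and div: "map_z L q + d1 w1 + d2 w2 = 0"
    by (auto simp: div_op_def)
  have dw: "d1 w1 \<in> tensorP A' (Pk (m - 2))" "d2 w2 \<in> tensorP A' (Pk (m - 2))"
    using d1_in_tensorP[OF w(1)] d2_in_tensorP[OF w(2)] by (simp_all only: m2)
  have Lq: "map_z L q = - (d1 w1 + d2 w2)"
    using div by (metis eq_neg_iff_add_eq_0 add.assoc)
  have "q = map_z Linv (map_z L q)"
    by (simp add: map_z_Linv_L[OF q])
  also have "\<dots> = map_z Linv (- (d1 w1 + d2 w2))"
    by (simp only: Lq)
  also have "\<dots> = - map_z Linv (d1 w1) - map_z Linv (d2 w2)"
    by (simp only: map_z_uminus[OF lin_space_A' lin_on_Linv tensorP_add[OF dw]]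
        map_z_add[OF lin_space_A' lin_on_Linv dw]) simp
  finally have q_eq: "q = - map_z Linv (d1 w1) - map_z Linv (d2 w2)" .
  have Lw: "map_z Linv w1 \<in> tensorP A (Pk (m - 1))" "map_z Linv w2 \<in> tensorP A (Pk (m - 1))"
    using map_z_Linv_tensorP w by blast+
  have "curl_op L (0, map_z Linv w2, - map_z Linv w1) = Q"
    by (simp add: Q q_eq curl_op_def d1_zero d2_zero d1_uminus[OF Lw(1)] map_z_L_Linv[OF w(1)] map_z_L_Linv[OF w(2)]
        map_z_uminus[OF lin_space_A lin_on_L Lw(1)] d1_map_z[OF lin_space_A' lin_on_Linv w(1)]
        d2_map_z[OF lin_space_A' lin_on_Linv w(2)])
  moreover have "(0, map_z Linv w2, - map_z Linv w1)
      \<in> tensorP A' (Pk m) \<times> tensorP A (Pk (m - 1)) \<times> tensorP A (Pk (m - 1))"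
    using tensorP_zero Lw(2) tensorP_uminus[OF lin_space_A Lw(1)] by blast
  ultimately show "Q \<in> curl_op L ` (tensorP A' (Pk m) \<times> tensorP A (Pk (m - 1)) \<times> tensorP A (Pk (m - 1)))"
    by (metis image_eqI)
qed

lemma div_surjective:
  "div_op L ` (tensorP A (Pk (m - 2)) \<times> tensorP A' (Pk (m - 1)) \<times> tensorP A' (Pk (m - 1))) =
    tensorP A' (Pk (m - 2))"
proof (intro set_eqI iffI)
  have m2: "m - 1 - 1 = m - 2"
    by simp
  fix f assume "f \<in> div_op L ` (tensorP A (Pk (m - 2)) \<times> tensorP A' (Pk (m - 1)) \<times> tensorP A' (Pk (m - 1)))"
  then obtain q w1 w2 where f: "f = div_op L (q, w1, w2)" and q: "q \<in> tensorP A (Pk (m - 2))"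
    and w: "w1 \<in> tensorP A' (Pk (m - 1))" "w2 \<in> tensorP A' (Pk (m - 1))"
    by auto
  have "d1 w1 \<in> tensorP A' (Pk (m - 2))" "d2 w2 \<in> tensorP A' (Pk (m - 2))"
    using d1_in_tensorP[OF w(1)] d2_in_tensorP[OF w(2)] by (simp_all only: m2)
  then show "f \<in> tensorP A' (Pk (m - 2))"
    by (simp add: f div_op_def tensorP_add map_z_L_tensorP[OF q])
next
  fix f assume f: "f \<in> tensorP A' (Pk (m - 2))"
  then have "div_op L (map_z Linv f, 0, 0) = f"
    by (simp add: div_op_def map_z_L_Linv d1_zero d2_zero)
  moreover have "(map_z Linv f, 0, 0) \<in> tensorP A (Pk (m - 2)) \<times> tensorP A' (Pk (m - 1)) \<times> tensorP A' (Pk (m - 1))"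
    using map_z_Linv_tensorP[OF f] tensorP_zero by blast
  ultimately show "f \<in> div_op L ` (tensorP A (Pk (m - 2)) \<times> tensorP A' (Pk (m - 1)) \<times> tensorP A' (Pk (m - 1)))"
    by (metis image_eqI)
qed

end

lemma dxiT_eq_map_z: "dxiT \<kappa>0 N = map_z (dxi \<kappa>0 N)"
  by (simp add: fun_eq_iff dxiT_def map_z_def)

lemma gradK_eq_grad_op: "gradK \<kappa>0 N = grad_op (dxi \<kappa>0 N)"
  by (simp add: fun_eq_iff gradK_def grad_op_def dxiT_eq_map_z)

lemma curlK_eq_curl_op: "curlK \<kappa>0 N = curl_op (dxi \<kappa>0 N)"
  by (simp add: fun_eq_iff curlK_def curl_op_def dxiT_eq_map_z split: prod.split)

lemma divK_eq_div_op: "divK \<kappa>0 N = div_op (dxi \<kappa>0 N)"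
  by (simp add: fun_eq_iff divK_def div_op_def dxiT_eq_map_z split: prod.split)

lemma VK_eq:
  "VK \<kappa>0 N p = tensorP (Wxi' N) (Pk p) \<times> tensorP (Wxi \<kappa>0 N) (Pk (p - 1)) \<times> tensorP (Wxi \<kappa>0 N) (Pk (p - 1))"
  by (auto simp: VK_def)

text \<open>Since \<open>W\<^sub>\<xi>' \<otimes> V\<^sub>T\<close> is closed under negation, the \<open>\<perp>\<close> in \<open>Q\<close> does not change it as a set.\<close>

lemma QK_eq:
  "QK \<kappa>0 N p = tensorP (Wxi \<kappa>0 N) (Pk (p - 2)) \<times> tensorP (Wxi' N) (Pk (p - 1)) \<times> tensorP (Wxi' N) (Pk (p - 1))"
proof -
  have neg: "(\<lambda>z x. - g z x) = - g" for g :: sfun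
    by (simp add: fun_eq_iff)
  have "(\<exists>g1 g2. g1 \<in> tensorP (Wxi' N) (Pk (p - 1)) \<and> g2 \<in> tensorP (Wxi' N) (Pk (p - 1)) \<and>
      w1 = - g2 \<and> w2 = g1) \<longleftrightarrow> w1 \<in> tensorP (Wxi' N) (Pk (p - 1)) \<and> w2 \<in> tensorP (Wxi' N) (Pk (p - 1))"
    for w1 w2
    using tensorP_uminus[OF lin_space_Wxi'] by (metis minus_minus)
  then show ?thesis
    unfolding QK_def neg by auto
qed

theorem theorem1:
  fixes \<kappa>0 :: complex and N p :: nat and a b c :: "real \<times> real"
  assumes "Re \<kappa>0 > 0"
    and "p \<ge> 2"
    and "(fst b - fst a) * (snd c - snd a) - (snd b - snd a) * (fst c - fst a) \<noteq> 0"
  shows "gradK \<kappa>0 N ` WK \<kappa>0 N p = {V \<in> VK \<kappa>0 N p. curlK \<kappa>0 N V = (zf, (zf, zf))} \<and>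
    curlK \<kappa>0 N ` VK \<kappa>0 N p = {Q \<in> QK \<kappa>0 N p. divK \<kappa>0 N Q = zf} \<and>
    divK \<kappa>0 N ` QK \<kappa>0 N p = XK N p"
proof -
  have "\<kappa>0 \<noteq> 0"
    using assms(1) by auto
  then interpret xi_isomorphism "dxi \<kappa>0 N" "Wxi \<kappa>0 N" "Wxi' N"
    by unfold_locales (simp_all add: lin_space_Wxi lin_space_Wxi' lin_on_dxi bij_betw_dxi)
  have "zf = 0"
    by (simp add: zf_def zero_fun_def)
  then show ?thesis
    unfolding WK_def XK_def VK_eq QK_eq gradK_eq_grad_op curlK_eq_curl_op divK_eq_div_op
    using grad_exact curl_exact div_surjective by simp
qed

end
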